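(* Let $m\geq 3$ be an integer. Then (i) $B_c(m,m+1;8)\geq (2m+1)(m^2-m+2)$; (ii) $B_c(m,m^2+1;8)\geq (m^2+m+1)(m^3-m^2+2)$; (iii) $B_c(m,m+1;12)\geq (2m+1)(m^4-2m^3+2m^2-m+2)$.
   Context: For integers $a,b\geq 2$ and even $g\ge4$, an $(a,b;g)$-bipartite biregular graph is a finite simple bipartite graph of girth exactly $g$ in which all vertices of one bipartition class have degree $a$ and all vertices of the other class have degree $b$. $B_c(a,b;g)$ denotes the minimum order of an $(a,b;g)$-bipartite biregular graph. *)

theory Defs
  imports Main
begin

definition simple_graph :: "'a set \<Rightarrow> ('a \<Rightarrow> 'a \<Rightarrow> bool) \<Rightarrow> bool" where
  "simple_graph V E \<longleftrightarrow> finite V \<and> (\<forall>u v. E u v \<longrightarrow> E v u)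
     \<and> (\<forall>v. \<not> E v v) \<and> (\<forall>u v. E u v \<longrightarrow> u \<in> V \<and> v \<in> V)"

definition degree :: "'a set \<Rightarrow> ('a \<Rightarrow> 'a \<Rightarrow> bool) \<Rightarrow> 'a \<Rightarrow> nat" where
  "degree V E v = card {w \<in> V. E v w}"

definition is_cycle :: "'a set \<Rightarrow> ('a \<Rightarrow> 'a \<Rightarrow> bool) \<Rightarrow> 'a list \<Rightarrow> bool" where
  "is_cycle V E cs \<longleftrightarrow> length cs \<ge> 3 \<and> distinct cs \<and> set cs \<subseteq> V
     \<and> (\<forall>i < length cs. E (cs ! i) (cs ! ((i + 1) mod length cs)))"

definition has_cycle_of_length :: "'a set \<Rightarrow> ('a \<Rightarrow> 'a \<Rightarrow> bool) \<Rightarrow> nat \<Rightarrow> bool" where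
  "has_cycle_of_length V E k \<longleftrightarrow> (\<exists>cs. is_cycle V E cs \<and> length cs = k)"

text \<open>The girth: length of a shortest cycle (meaningful when a cycle exists).\<close>

definition girth :: "'a set \<Rightarrow> ('a \<Rightarrow> 'a \<Rightarrow> bool) \<Rightarrow> nat" where
  "girth V E = (LEAST k. has_cycle_of_length V E k)"

definition bip_biregular :: "'a set \<Rightarrow> ('a \<Rightarrow> 'a \<Rightarrow> bool) \<Rightarrow> nat \<Rightarrow> nat \<Rightarrow> nat \<Rightarrow> bool" where
  "bip_biregular V E a b g \<longleftrightarrow> simple_graph V E
     \<and> (\<exists>X Y. X \<union> Y = V \<and> X \<inter> Y = {}
          \<and> (\<forall>u v. E u v \<longrightarrow> (u \<in> X \<and> v \<in> Y) \<or> (u \<in> Y \<and> v \<in> X))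
          \<and> (\<forall>x \<in> X. degree V E x = a) \<and> (\<forall>y \<in> Y. degree V E y = b))
     \<and> (\<exists>k. has_cycle_of_length V E k) \<and> girth V E = g"

end

theory Submission
  imports Defs "Jordan_Normal_Form.Schur_Decomposition"
begin

(*
  Let X and Y be the classes of degree m and b and put r = (m - 1) * (b - 1). If there is no
  cycle of length at most 7 (resp. 11), two non-backtracking walks of length at most 3
  (resp. 5) from x in X to y in Y coincide, so the numbers of such walks of length 1, 3 (and 5)
  add up to at most 1. Summing over y gives the Moore-type bound card Y >= m * K with
  K = 1 + r (resp. 1 + r + r^2). Since m and b are coprime, m divides card Y and
  card V = (m + b) * card Y / m, so it remains to exclude card Y = m * K.

  In that extremal case every pair (x, y) is joined by exactly one such walk, and the
  recurrences for non-backtracking walk counts show that P = N N^T, N the biadjacency matrix,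
  satisfies P^2 = (m + b - 2) P + m J (resp. a cubic relation). After removing the eigenvalue
  m * b of the constant vector, a polynomial in P is an idempotent matrix, so its trace, a rank,
  is a natural number. The resulting divisibility fails for the three pairs of degrees below.
*)

section \<open>Idempotent matrices have integral trace\<close>

definition mat_trace :: "'b::comm_ring_1 mat \<Rightarrow> 'b" where
  "mat_trace A = (\<Sum>i<dim_row A. A $$ (i,i))"

lemma mat_trace_mult_comm:
  fixes A B :: "'b::comm_ring_1 mat"
  assumes "A \<in> carrier_mat n k" "B \<in> carrier_mat k n"
  shows "mat_trace (A * B) = mat_trace (B * A)"
proof -
  have "mat_trace (A * B) = (\<Sum>i<n. \<Sum>j<k. A $$ (i,j) * B $$ (j,i))"
    using assms by (simp add: mat_trace_def scalar_prod_def atLeast0LessThan)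
  also have "\<dots> = (\<Sum>j<k. \<Sum>i<n. B $$ (j,i) * A $$ (i,j))"
    by (subst sum.swap) (simp add: mult.commute)
  also have "\<dots> = mat_trace (B * A)"
    using assms by (simp add: mat_trace_def scalar_prod_def atLeast0LessThan)
  finally show ?thesis .
qed

lemma upper_triangular_idempotent_diag:
  fixes B :: "'b::idom mat"
  assumes B: "B \<in> carrier_mat n n" and ut: "upper_triangular B" and idem: "B * B = B"
    and i: "i < n"
  shows "B $$ (i,i) = 0 \<or> B $$ (i,i) = 1"
proof -
  have off_diag: "B $$ (i,j) * B $$ (j,i) = 0" if "j < n" "j \<noteq> i" for j
    using ut B i that unfolding upper_triangular_def by (cases "j < i") auto
  have "B $$ (i,i) = (B * B) $$ (i,i)" using idem by simp
  also have "\<dots> = (\<Sum>j<n. B $$ (i,j) * B $$ (j,i))"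
    using B i by (simp add: scalar_prod_def atLeast0LessThan)
  also have "\<dots> = B $$ (i,i) * B $$ (i,i)"
    using i by (subst sum.remove[of _ i]) (auto intro!: sum.neutral off_diag)
  finally show ?thesis by (metis mult_cancel_left1 mult_eq_0_iff)
qed

lemma sum_in_Nats: "(\<And>i. i \<in> I \<Longrightarrow> f i \<in> \<nat>) \<Longrightarrow> sum f I \<in> (\<nat> :: 'b::semiring_1 set)"
  by (induction I rule: infinite_finite_induct) auto

lemma mat_trace_idempotent_Nats:
  fixes A :: "complex mat"
  assumes A: "A \<in> carrier_mat n n" and idem: "A * A = A"
  shows "mat_trace A \<in> \<nat>"
proof -
  obtain es where "char_poly A = (\<Prod>e\<leftarrow>es. [:- e, 1:])"
    using char_poly_factorized[OF A] by blast
  then obtain B where B: "B \<in> carrier_mat n n" and ut: "upper_triangular B"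
    and "similar_mat A B"
    using schur_decomposition_exists[OF A] by blast
  then obtain P Q where wit: "similar_mat_wit B A Q P"
    unfolding similar_mat_def using similar_mat_wit_sym by blast
  from similar_mat_witD2[OF B wit] have P: "P \<in> carrier_mat n n" and Q: "Q \<in> carrier_mat n n"
    and PQ: "P * Q = 1\<^sub>m n" and BA: "B = Q * A * P" by auto
  have "B * B = B"
    using similar_mat_wit_pow_id[OF wit, of 2] A idem BA by (simp add: numeral_2_eq_2)
  have "mat_trace B = mat_trace (Q * (A * P))"
    using BA A P Q by (simp add: assoc_mult_mat[of _ n n _ n _ n])
  also have "\<dots> = mat_trace ((A * P) * Q)"
    using A P Q by (intro mat_trace_mult_comm) auto
  also have "\<dots> = mat_trace A"
    using A P Q PQ by (simp add: assoc_mult_mat[of _ n n _ n _ n])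
  finally have "mat_trace A = (\<Sum>i<n. B $$ (i,i))"
    using B by (simp add: mat_trace_def)
  also have "\<dots> \<in> \<nat>"
    using upper_triangular_idempotent_diag[OF B ut \<open>B * B = B\<close>]
    by (intro sum_in_Nats) (metis Nats_0 Nats_1 lessThan_iff)
  finally show ?thesis .
qed

section \<open>Matrices indexed by finite sets\<close>

text \<open>Matrices are functions of row and column index, and \<open>kmult S\<close> multiplies them summing
  over the index set \<open>S\<close> only, so entries outside the intended index sets never matter.\<close>

definition kmult :: "'b set \<Rightarrow> ('a \<Rightarrow> 'b \<Rightarrow> 'd::semiring_0) \<Rightarrow> ('b \<Rightarrow> 'c \<Rightarrow> 'd) \<Rightarrow> 'a \<Rightarrow> 'c \<Rightarrow> 'd" where
  "kmult S A B x y = (\<Sum>z\<in>S. A x z * B z y)"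

lemma trace_Nats_of_idempotent:
  fixes S :: "'b set" and E :: "'b \<Rightarrow> 'b \<Rightarrow> real"
  assumes fin: "finite S"
    and idem: "\<And>x y. x \<in> S \<Longrightarrow> y \<in> S \<Longrightarrow> kmult S E E x y = E x y"
  shows "(\<Sum>x\<in>S. E x x) \<in> \<nat>"
proof -
  obtain xs where "distinct xs" and "set xs = S"
    using finite_distinct_list[OF fin] by blast
  define n where "n = length xs"
  have bij: "bij_betw ((!) xs) {..<n} S"
    using bij_betw_nth[OF \<open>distinct xs\<close>] \<open>set xs = S\<close> n_def by auto
  then have reindex: "(\<Sum>z\<in>S. f z) = (\<Sum>k<n. f (xs ! k))" for f :: "'b \<Rightarrow> real"
    by (metis sum.reindex_bij_betw)
  have mem: "xs ! i \<in> S" if "i < n" for i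
    using bij that by (auto dest: bij_betw_apply)
  define A :: "complex mat" where "A = mat n n (\<lambda>(i,j). of_real (E (xs ! i) (xs ! j)))"
  have A: "A \<in> carrier_mat n n" unfolding A_def by simp
  have "A * A = A"
  proof (rule eq_matI)
    fix i j assume "i < dim_row A" "j < dim_col A"
    then have i: "i < n" and j: "j < n" using A by auto
    have "(A * A) $$ (i,j) = of_real (\<Sum>k<n. E (xs ! i) (xs ! k) * E (xs ! k) (xs ! j))"
      using i j by (simp add: A_def scalar_prod_def atLeast0LessThan)
    also have "\<dots> = A $$ (i,j)"
      using idem[OF mem[OF i] mem[OF j]] i j by (simp add: A_def kmult_def reindex)
    finally show "(A * A) $$ (i,j) = A $$ (i,j)" .
  qed (use A in auto)
  then have "mat_trace A \<in> \<nat>" by (rule mat_trace_idempotent_Nats[OF A])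
  moreover have "mat_trace A = of_real (\<Sum>x\<in>S. E x x)"
    using A by (simp add: mat_trace_def A_def reindex)
  ultimately obtain k where "of_real (\<Sum>x\<in>S. E x x) = (of_nat k :: complex)"
    by (auto elim!: Nats_cases)
  then have "(\<Sum>x\<in>S. E x x) = of_nat k"
    by (metis of_real_eq_iff of_real_of_nat_eq)
  then show ?thesis by simp
qed

lemma kmult_assoc: "kmult S (kmult T A B) C = kmult T A (kmult S B C)"
proof (intro ext)
  fix x y
  have "kmult S (kmult T A B) C x y = (\<Sum>z\<in>S. \<Sum>w\<in>T. A x w * B w z * C z y)"
    by (simp add: kmult_def sum_distrib_right)
  also have "\<dots> = (\<Sum>w\<in>T. \<Sum>z\<in>S. A x w * (B w z * C z y))"
    by (subst sum.swap) (simp add: mult.assoc)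
  also have "\<dots> = kmult T A (kmult S B C) x y"
    by (simp add: kmult_def sum_distrib_left)
  finally show "kmult S (kmult T A B) C x y = kmult T A (kmult S B C) x y" .
qed

lemma kmult_cong:
  assumes "\<And>z. z \<in> S \<Longrightarrow> A x z = A' x z" "\<And>z. z \<in> S \<Longrightarrow> B z y = B' z y"
  shows "kmult S A B x y = kmult S A' B' x y"
  unfolding kmult_def using assms by (intro sum.cong) auto

lemma kmult_diff_left:
  "kmult S (\<lambda>x z. c * A x z - B x z) C x y = c * kmult S A C x y - kmult S B C x y"
  for A B :: "_ \<Rightarrow> _ \<Rightarrow> 'd::comm_ring"
  by (simp add: kmult_def algebra_simps sum_subtractf sum_distrib_left)

lemma kmult_diff_right:
  "kmult S A (\<lambda>z y. c * B z y - C z y) x y = c * kmult S A B x y - kmult S A C x y"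
  for A B :: "_ \<Rightarrow> _ \<Rightarrow> 'd::comm_ring"
  by (simp add: kmult_def algebra_simps sum_subtractf sum_distrib_left)

lemma kmult_scale_right: "kmult S A (\<lambda>z y. c * B z y) x y = c * kmult S A B x y"
  for A B :: "_ \<Rightarrow> _ \<Rightarrow> 'd::comm_semiring_0"
  by (simp add: kmult_def algebra_simps sum_distrib_left)

lemma kmult_affine_left:
  "kmult S (\<lambda>x z. c * A x z + u) B x y = c * kmult S A B x y + u * (\<Sum>z\<in>S. B z y)"
  for A B :: "_ \<Rightarrow> _ \<Rightarrow> 'd::comm_ring"
  by (simp add: kmult_def algebra_simps sum.distrib sum_distrib_left)

lemma kmult_affine2_left:
  "kmult S (\<lambda>x z. s * A x z - p * C x z + u) B x y
    = s * kmult S A B x y - p * kmult S C B x y + u * (\<Sum>z\<in>S. B z y)"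
  for A B :: "_ \<Rightarrow> _ \<Rightarrow> 'd::comm_ring"
  by (simp add: kmult_def algebra_simps sum.distrib sum_subtractf sum_distrib_left)

lemma kmult_centered:
  fixes A B :: "_ \<Rightarrow> _ \<Rightarrow> 'd::field_char_0"
  assumes "finite S" and "(\<Sum>z\<in>S. A x z) = \<alpha>" and "(\<Sum>z\<in>S. B z y) = \<beta>"
  defines "n \<equiv> of_nat (card S)"
  shows "kmult S (\<lambda>x z. A x z - \<alpha> / n) (\<lambda>z y. B z y - \<beta> / n) x y
      = kmult S A B x y - \<alpha> * \<beta> / n"
proof (cases "S = {}")
  case True then show ?thesis using assms by (simp add: kmult_def)
next
  case False
  then have "n \<noteq> 0" using \<open>finite S\<close> by (simp add: n_def)
  have "(\<Sum>z\<in>S. (A x z - \<alpha> / n) * (B z y - \<beta> / n)) = (\<Sum>z\<in>S. A x z * B z y)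
      - \<beta> / n * (\<Sum>z\<in>S. A x z) - \<alpha> / n * (\<Sum>z\<in>S. B z y) + n * (\<alpha> / n) * (\<beta> / n)"
    by (simp add: n_def algebra_simps sum.distrib sum_subtractf sum_distrib_left sum_divide_distrib)
  also have "\<dots> = (\<Sum>z\<in>S. A x z * B z y) - \<alpha> * \<beta> / n"
    using assms(2,3) \<open>n \<noteq> 0\<close> by (simp add: field_simps)
  finally show ?thesis by (simp add: kmult_def)
qed

lemma sum_kmult_right: "(\<Sum>y\<in>T. kmult S A B x y) = (\<Sum>z\<in>S. A x z * (\<Sum>y\<in>T. B z y))"
  unfolding kmult_def by (subst sum.swap) (simp add: sum_distrib_left)

lemma sum_kmult_left: "(\<Sum>x\<in>T. kmult S A B x y) = (\<Sum>z\<in>S. (\<Sum>x\<in>T. A x z) * B z y)"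
  unfolding kmult_def by (subst sum.swap) (simp add: sum_distrib_right)

lemma trace_div_Nats_of_square_eq:
  fixes Z :: "'b \<Rightarrow> 'b \<Rightarrow> real"
  assumes "finite S" and "c \<noteq> 0"
    and sq: "\<And>x y. x \<in> S \<Longrightarrow> y \<in> S \<Longrightarrow> kmult S Z Z x y = c * Z x y"
  shows "(\<Sum>x\<in>S. Z x x) / c \<in> \<nat>"
proof -
  have "(\<Sum>x\<in>S. Z x x / c) \<in> \<nat>"
  proof (rule trace_Nats_of_idempotent[OF \<open>finite S\<close>, where E = "\<lambda>x y. Z x y / c"])
    fix x y assume "x \<in> S" "y \<in> S"
    then show "kmult S (\<lambda>x y. Z x y / c) (\<lambda>x y. Z x y / c) x y = Z x y / c"
      using sq[of x y] \<open>c \<noteq> 0\<close>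
      by (simp add: kmult_def sum_divide_distrib[symmetric] power2_eq_square)
  qed
  then show ?thesis by (simp add: sum_divide_distrib)
qed

lemma trace_div_Nats_of_cube_eq:
  fixes Z :: "'b \<Rightarrow> 'b \<Rightarrow> real"
  assumes "finite S" and "p \<noteq> 0"
    and cube: "\<And>x y. x \<in> S \<Longrightarrow> y \<in> S
      \<Longrightarrow> kmult S Z (kmult S Z Z) x y = s * kmult S Z Z x y - p * Z x y"
  shows "(\<Sum>x\<in>S. s * Z x x - kmult S Z Z x x) / p \<in> \<nat>"
proof -
  define F where "F = (\<lambda>x y. s * Z x y - kmult S Z Z x y)"
  have ZF: "kmult S Z F x y = p * Z x y" if "x \<in> S" "y \<in> S" for x y
    using cube[OF that] unfolding F_def kmult_diff_right by simp
  have "(\<Sum>x\<in>S. F x x / p) \<in> \<nat>"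
  proof (rule trace_Nats_of_idempotent[OF \<open>finite S\<close>, where E = "\<lambda>x y. F x y / p"])
    fix x y assume x: "x \<in> S" and y: "y \<in> S"
    have "kmult S (kmult S Z Z) F x y = kmult S Z (\<lambda>z y. p * Z z y) x y"
      unfolding kmult_assoc using ZF y by (intro kmult_cong) auto
    then have "kmult S F F x y = s * (p * Z x y) - p * kmult S Z Z x y"
      using ZF[OF x y] kmult_diff_left[of S s Z "kmult S Z Z" F x y]
      by (simp add: kmult_scale_right F_def[symmetric])
    also have "\<dots> = p * F x y" by (simp add: F_def algebra_simps)
    finally show "kmult S (\<lambda>x y. F x y / p) (\<lambda>x y. F x y / p) x y = F x y / p"
      using \<open>p \<noteq> 0\<close> by (simp add: kmult_def sum_divide_distrib[symmetric] power2_eq_square)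
  qed
  then show ?thesis by (simp add: F_def sum_divide_distrib)
qed

text \<open>The constant vector is an eigenvector of \<open>P\<close> for \<open>\<kappa>\<close>. Subtracting \<open>\<kappa>/n\<close> from
  every entry removes this eigenvalue, and the square relation then makes the shifted matrix,
  divided by \<open>c\<close>, the projection onto the eigenspace of \<open>c\<close>; its trace is a multiplicity.\<close>

lemma trace_div_Nats_of_regular_square_eq:
  fixes P :: "'b \<Rightarrow> 'b \<Rightarrow> real" and S :: "'b set"
  defines "n \<equiv> real (card S)"
  assumes "finite S" and "c \<noteq> 0"
    and row: "\<And>x. x \<in> S \<Longrightarrow> (\<Sum>z\<in>S. P x z) = \<kappa>"
    and col: "\<And>y. y \<in> S \<Longrightarrow> (\<Sum>z\<in>S. P z y) = \<kappa>"
    and square: "\<And>x y. x \<in> S \<Longrightarrow> y \<in> S \<Longrightarrow> kmult S P P x y = c * P x y + \<mu>"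
    and \<mu>: "n * \<mu> = \<kappa>^2 - c * \<kappa>"
  shows "(\<Sum>x\<in>S. P x x - \<kappa> / n) / c \<in> \<nat>"
proof -
  define Z where "Z x y = P x y - \<kappa> / n" for x y
  have "kmult S Z Z x y = c * Z x y" if "x \<in> S" "y \<in> S" for x y
  proof -
    have "n \<noteq> 0" using \<open>finite S\<close> that by (auto simp: n_def)
    have "kmult S Z Z x y = kmult S P P x y - \<kappa> * \<kappa> / n"
      unfolding Z_def n_def using \<open>finite S\<close> row col that by (intro kmult_centered) auto
    also have "\<dots> = c * Z x y"
      using square[OF that] \<mu> \<open>n \<noteq> 0\<close> by (simp add: Z_def field_simps power2_eq_square)
    finally show ?thesis .
  qed
  from trace_div_Nats_of_square_eq[OF \<open>finite S\<close> \<open>c \<noteq> 0\<close> this]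
  show ?thesis by (simp add: Z_def)
qed

lemma trace_div_Nats_of_regular_cube_eq:
  fixes P :: "'b \<Rightarrow> 'b \<Rightarrow> real" and S :: "'b set"
  defines "n \<equiv> real (card S)"
  assumes "finite S" and "p \<noteq> 0"
    and row: "\<And>x. x \<in> S \<Longrightarrow> (\<Sum>z\<in>S. P x z) = \<kappa>"
    and col: "\<And>y. y \<in> S \<Longrightarrow> (\<Sum>z\<in>S. P z y) = \<kappa>"
    and cube: "\<And>x y. x \<in> S \<Longrightarrow> y \<in> S
      \<Longrightarrow> kmult S P (kmult S P P) x y = s * kmult S P P x y - p * P x y + \<mu>"
    and \<mu>: "n * \<mu> = \<kappa>^3 - s * \<kappa>^2 + p * \<kappa>"
  shows "(\<Sum>x\<in>S. s * (P x x - \<kappa> / n) - (kmult S P P x x - \<kappa>^2 / n)) / p \<in> \<nat>"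
proof -
  define Z where "Z x y = P x y - \<kappa> / n" for x y
  have row2: "(\<Sum>z\<in>S. kmult S P P x z) = \<kappa>^2" if "x \<in> S" for x
    using row that by (simp add: sum_kmult_right power2_eq_square sum_distrib_right[symmetric])
  have col2: "(\<Sum>z\<in>S. kmult S P P z y) = \<kappa>^2" if "y \<in> S" for y
    using col that by (simp add: sum_kmult_left power2_eq_square sum_distrib_left[symmetric])
  have ZZ: "kmult S Z Z x y = kmult S P P x y - \<kappa>^2 / n" if "x \<in> S" "y \<in> S" for x y
    unfolding Z_def n_def power2_eq_square using \<open>finite S\<close> row col that
    by (intro kmult_centered) auto
  have "kmult S Z (kmult S Z Z) x y = s * kmult S Z Z x y - p * Z x y" if "x \<in> S" "y \<in> S" for x y
  proof -
    have "n \<noteq> 0" using \<open>finite S\<close> that by (auto simp: n_def)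
    have "kmult S Z (kmult S Z Z) x y = kmult S Z (\<lambda>z y. kmult S P P z y - \<kappa>^2 / n) x y"
      using ZZ that by (intro kmult_cong) auto
    also have "\<dots> = kmult S P (kmult S P P) x y - \<kappa> * \<kappa>^2 / n"
      unfolding Z_def n_def using \<open>finite S\<close> row col2 that by (intro kmult_centered) auto
    also have "\<dots> = s * (kmult S P P x y - \<kappa>^2 / n) - p * (P x y - \<kappa> / n)
        + (n * \<mu> - (\<kappa>^3 - s * \<kappa>^2 + p * \<kappa>)) / n"
      unfolding cube[OF that] using \<open>n \<noteq> 0\<close>
      by (simp add: field_simps power2_eq_square power3_eq_cube)
    also have "\<dots> = s * kmult S Z Z x y - p * Z x y"
      using ZZ[OF that] \<mu> by (simp add: Z_def)
    finally show ?thesis .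
  qed
  from trace_div_Nats_of_cube_eq[OF \<open>finite S\<close> \<open>p \<noteq> 0\<close> this]
  show ?thesis by (simp add: Z_def ZZ cong: sum.cong)
qed

section \<open>Non-backtracking walks\<close>

definition is_walk :: "('a \<Rightarrow> 'a \<Rightarrow> bool) \<Rightarrow> (nat \<Rightarrow> 'a) \<Rightarrow> nat \<Rightarrow> bool" where
  "is_walk E w l \<longleftrightarrow> (\<forall>i<l. E (w i) (w (Suc i)))"

definition non_backtracking :: "(nat \<Rightarrow> 'a) \<Rightarrow> nat \<Rightarrow> bool" where
  "non_backtracking w l \<longleftrightarrow> (\<forall>i. i + 2 \<le> l \<longrightarrow> w i \<noteq> w (i + 2))"

lemma is_walk_Suc_imp: "is_walk E w (Suc l) \<Longrightarrow> is_walk E w l"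
  unfolding is_walk_def by auto

lemma non_backtracking_Suc_imp: "non_backtracking w (Suc l) \<Longrightarrow> non_backtracking w l"
  unfolding non_backtracking_def by auto

lemma is_cycle_of_closed_walk:
  assumes sg: "simple_graph V E" and walk: "is_walk E w d" and closed: "w d = w 0"
    and d: "3 \<le> d" and inj: "inj_on w {..<d}"
  shows "is_cycle V E (map w [0..<d])"
proof -
  have adj: "E (w k) (w ((k + 1) mod d))" if "k < d" for k
    using walk closed that unfolding is_walk_def by (cases "k + 1 = d") auto
  have "w k \<in> V" if "k < d" for k
    using adj[OF that] sg unfolding simple_graph_def by blast
  then show ?thesis
    unfolding is_cycle_def using d inj adj by (auto simp: distinct_map atLeast0LessThan)
qed

lemma closed_non_backtracking_walk_has_cycle:
  assumes sg: "simple_graph V E" and walk: "is_walk E w l" and nb: "non_backtracking w l"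
    and closed: "w l = w 0" and l: "1 \<le> l"
  shows "\<exists>k. 3 \<le> k \<and> k \<le> l \<and> has_cycle_of_length V E k"
proof -
  define Q where "Q d \<longleftrightarrow> 0 < d \<and> (\<exists>i. i + d \<le> l \<and> w i = w (i + d))" for d
  have "Q l" using l closed unfolding Q_def by force
  define d where "d = (LEAST d. Q d)"
  have "Q d" and "d \<le> l" unfolding d_def using \<open>Q l\<close> by (auto intro: LeastI Least_le)
  then obtain i where "0 < d" and "i + d \<le> l" and rep: "w (i + d) = w i"
    unfolding Q_def by auto
  define u where "u k = w (i + k)" for k
  have walk_u: "is_walk E u d" using walk \<open>i + d \<le> l\<close> unfolding is_walk_def u_def by auto
  have "d \<noteq> 1"
    using walk_u rep sg unfolding is_walk_def u_def simple_graph_def by auto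
  moreover have "d \<noteq> 2"
    using nb rep \<open>i + d \<le> l\<close> unfolding non_backtracking_def by auto
  ultimately have "3 \<le> d" using \<open>0 < d\<close> by linarith
  have no_repeat: "u j \<noteq> u k" if "j < k" "k < d" for j k
  proof
    assume "u j = u k"
    then have "Q (k - j)"
      using that \<open>i + d \<le> l\<close> unfolding Q_def u_def by (intro conjI exI[of _ "i + j"]) auto
    then show False
      using not_less_Least[of "k - j" Q] that unfolding d_def[symmetric] by auto
  qed
  then have "inj_on u {..<d}" by (metis inj_onI lessThan_iff linorder_neqE_nat)
  then have "is_cycle V E (map u [0..<d])"
    using is_cycle_of_closed_walk[OF sg walk_u] rep \<open>3 \<le> d\<close> by (simp add: u_def)
  then show ?thesis
    unfolding has_cycle_of_length_def using \<open>3 \<le> d\<close> \<open>d \<le> l\<close>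
    by (intro exI[of _ d]) (auto intro!: exI[of _ "map u [0..<d]"])
qed

lemma no_short_closed_non_backtracking_walk:
  assumes "simple_graph V E" and "\<And>k. 3 \<le> k \<Longrightarrow> k \<le> L \<Longrightarrow> \<not> has_cycle_of_length V E k"
    and "is_walk E w l" "non_backtracking w l" "w l = w 0" "1 \<le> l" "l \<le> L"
  shows False
  using closed_non_backtracking_walk_has_cycle[OF assms(1,3-6)] assms(2,7) by fastforce

lemma is_walk_join_rev:
  assumes sym: "\<And>u v. E u v \<Longrightarrow> E v u"
    and "is_walk E w p" "is_walk E w' q" "w p = w' q"
  shows "is_walk E (\<lambda>i. if i \<le> p then w i else w' (p + q - i)) (p + q)"
  unfolding is_walk_def
proof (intro allI impI)
  fix i assume "i < p + q"
  show "E (if i \<le> p then w i else w' (p + q - i))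
      (if Suc i \<le> p then w (Suc i) else w' (p + q - Suc i))"
  proof (cases "i < p")
    case True then show ?thesis using assms(2) unfolding is_walk_def by auto
  next
    case False
    then have "E (w' (p + q - Suc i)) (w' (Suc (p + q - Suc i)))"
      using assms(3) \<open>i < p + q\<close> unfolding is_walk_def by auto
    moreover have "Suc (p + q - Suc i) = p + q - i" using \<open>i < p + q\<close> by auto
    ultimately show ?thesis using False assms(4) by (auto intro: sym)
  qed
qed

lemma non_backtracking_join_rev:
  assumes "non_backtracking w p" "non_backtracking w' q" "w p = w' q"
    and "0 < p" "0 < q" "w (p - 1) \<noteq> w' (q - 1)"
  shows "non_backtracking (\<lambda>i. if i \<le> p then w i else w' (p + q - i)) (p + q)"
  unfolding non_backtracking_def
proof (intro allI impI)
  fix i assume i: "i + 2 \<le> p + q"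
  consider "i + 2 \<le> p" | "i + 1 = p" | "i = p" | "p < i" by linarith
  then show "(if i \<le> p then w i else w' (p + q - i))
      \<noteq> (if i + 2 \<le> p then w (i + 2) else w' (p + q - (i + 2)))"
  proof cases
    case 1 then show ?thesis using assms(1) unfolding non_backtracking_def by auto
  next
    case 2 then show ?thesis using assms(6) by (auto simp: numeral_2_eq_2)
  next
    case 3
    then have "w' (q - 2) \<noteq> w' (q - 2 + 2)" using assms(2) i unfolding non_backtracking_def by auto
    moreover have "q - 2 + 2 = q" using 3 i by auto
    ultimately show ?thesis using 3 assms(3) by auto
  next
    case 4
    then have "w' (p + q - (i + 2)) \<noteq> w' (p + q - (i + 2) + 2)"
      using assms(2) i unfolding non_backtracking_def by auto
    moreover have "p + q - (i + 2) + 2 = p + q - i" using i by auto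
    ultimately show ?thesis using 4 by auto
  qed
qed

lemma non_backtracking_walks_unique:
  assumes sg: "simple_graph V E"
    and no_cycle: "\<And>k. 3 \<le> k \<Longrightarrow> k \<le> L \<Longrightarrow> \<not> has_cycle_of_length V E k"
  shows "is_walk E w p \<Longrightarrow> non_backtracking w p \<Longrightarrow> is_walk E w' q \<Longrightarrow> non_backtracking w' q
    \<Longrightarrow> w 0 = w' 0 \<Longrightarrow> w p = w' q \<Longrightarrow> p + q \<le> L \<Longrightarrow> p = q \<and> (\<forall>i\<le>p. w i = w' i)"
proof (induction p arbitrary: q)
  case 0
  show ?case
  proof (cases q)
    case (Suc q')
    then show ?thesis
      using no_short_closed_non_backtracking_walk[OF sg no_cycle, where w = w' and l = q] 0 by auto
  qed (use 0 in auto)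
next
  case (Suc p)
  show ?case
  proof (cases q)
    case 0
    then show ?thesis
      using no_short_closed_non_backtracking_walk[OF sg no_cycle, where w = w and l = "Suc p"] Suc.prems by auto
  next
    case (Suc q')
    show ?thesis
    proof (cases "w p = w' q'")
      case True
      then have "p = q' \<and> (\<forall>i\<le>p. w i = w' i)"
        using Suc.IH[of q'] Suc.prems \<open>q = Suc q'\<close>
        by (auto dest: is_walk_Suc_imp non_backtracking_Suc_imp)
      then show ?thesis using Suc.prems(6) \<open>q = Suc q'\<close> by (auto simp: le_Suc_eq)
    next
      case False
      \<comment> \<open>the last steps differ, so the first walk followed by the reversed second one
        is a closed non-backtracking walk\<close>
      have sym: "\<And>u v. E u v \<Longrightarrow> E v u" using sg unfolding simple_graph_def by auto
      show ?thesis
        using no_short_closed_non_backtracking_walk[OF sg no_cycle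
            is_walk_join_rev[OF sym Suc.prems(1,3,6)]
            non_backtracking_join_rev[OF Suc.prems(2,4,6)]] False Suc.prems(5,7) \<open>q = Suc q'\<close>
        by auto
    qed
  qed
qed

lemma is_walk_Cons:
  "is_walk E (nth (u # v # ws)) (Suc n) \<longleftrightarrow> E u v \<and> is_walk E (nth (v # ws)) n"
  unfolding is_walk_def by (auto simp: less_Suc_eq_0_disj)

lemma non_backtracking_Cons:
  "non_backtracking (nth (u # v # w # ws)) (Suc (Suc n))
    \<longleftrightarrow> u \<noteq> w \<and> non_backtracking (nth (v # w # ws)) (Suc n)"
  unfolding non_backtracking_def
  apply (auto simp: less_Suc_eq_0_disj)
  apply (case_tac i) apply auto
  done

lemma is_walk_0: "is_walk E w 0"
  and non_backtracking_0: "non_backtracking w 0"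
  and non_backtracking_1: "non_backtracking w (Suc 0)"
  unfolding is_walk_def non_backtracking_def by auto

lemmas walk_list_simps = is_walk_Cons non_backtracking_Cons is_walk_0
  non_backtracking_0 non_backtracking_1 numeral_eq_Suc

section \<open>Bipartite biregular graphs\<close>

lemma sum_remove_if:
  assumes "finite A" and "a \<in> A"
  shows "sum g (A - {c}) = sum g (A - {a, c}) + (if a = c then 0 else g a)"
proof (cases "a = c")
  case False
  then have "sum g (A - {c}) = g a + sum g (A - {c} - {a})"
    using assms by (intro sum.remove) auto
  moreover have "A - {c} - {a} = A - {a, c}" by auto
  ultimately show ?thesis using False by (simp add: add.commute)
qed simp

lemma sum_eq_card_imp_eq_1:
  fixes f :: "'b \<Rightarrow> real"
  assumes "finite S" and "\<And>y. y \<in> S \<Longrightarrow> f y \<le> 1" and "sum f S = card S" and "y \<in> S"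
  shows "f y = 1"
proof -
  have "(\<Sum>y\<in>S. 1 - f y) = 0" using assms(3) by (simp add: sum_subtractf)
  then have "\<forall>y\<in>S. 1 - f y = 0" using assms(1,2) by (subst sum_nonneg_eq_0_iff[symmetric]) auto
  then show ?thesis using assms(4) by auto
qed

lemma int_dvd_of_div_Nats:
  fixes k d :: int
  assumes "real_of_int d \<noteq> 0" and "real_of_int k / real_of_int d \<in> \<nat>"
  shows "d dvd k"
proof -
  obtain t where "real_of_int k / real_of_int d = of_nat t" using assms(2) by (auto elim!: Nats_cases)
  then have "real_of_int k = real_of_int (int t * d)" using assms(1) by (simp add: field_simps)
  then show ?thesis by (simp only: of_int_eq_iff) simp
qed

locale bipartite_biregular =
  fixes V :: "'a set" and E :: "'a \<Rightarrow> 'a \<Rightarrow> bool" and X Y :: "'a set" and m b :: nat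
  assumes simple: "simple_graph V E"
    and parts: "X \<union> Y = V" and disjoint: "X \<inter> Y = {}"
    and bipartite: "\<And>u v. E u v \<Longrightarrow> (u \<in> X \<and> v \<in> Y) \<or> (u \<in> Y \<and> v \<in> X)"
    and degree_X: "\<And>x. x \<in> X \<Longrightarrow> Defs.degree V E x = m"
    and degree_Y: "\<And>y. y \<in> Y \<Longrightarrow> Defs.degree V E y = b"
begin

lemma finite_X: "finite X" and finite_Y: "finite Y"
  using simple parts unfolding simple_graph_def by auto

lemma E_sym: "E u v \<Longrightarrow> E v u"
  using simple unfolding simple_graph_def by auto

lemma card_V: "card V = card X + card Y"
  using parts disjoint finite_X finite_Y card_Un_disjoint by fastforce

definition adj :: "'a \<Rightarrow> 'a \<Rightarrow> real" where
  "adj u v = of_bool (E u v)"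

lemma adj_sym: "adj u v = adj v u"
  unfolding adj_def using E_sym by (cases "E u v") auto

lemma adj_idem: "adj u v * adj v u = adj u v"
  unfolding adj_def using E_sym by (cases "E u v") auto

lemma adj_cases: "adj u v = 0 \<or> adj u v = 1"
  unfolding adj_def by simp

lemma sum_adj_eq_card: "finite S \<Longrightarrow> (\<Sum>y\<in>S. adj x y) = card {y \<in> S. E x y}"
  unfolding adj_def by (simp add: Int_def)

lemma sum_adj_row: "x \<in> X \<Longrightarrow> (\<Sum>y\<in>Y. adj x y) = m"
proof -
  assume x: "x \<in> X"
  have "{y \<in> Y. E x y} = {w \<in> V. E x w}" using bipartite parts disjoint x by blast
  then show ?thesis
    using degree_X[OF x] sum_adj_eq_card[OF finite_Y] unfolding Defs.degree_def by simp
qed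

lemma sum_adj_row':
  assumes "x \<in> X"
  shows "(\<Sum>y\<in>Y. adj y x) = m"
proof -
  have "(\<Sum>y\<in>Y. adj y x) = (\<Sum>y\<in>Y. adj x y)" by (intro sum.cong refl) (rule adj_sym)
  then show ?thesis using sum_adj_row[OF assms] by simp
qed

lemma sum_adj_col: "y \<in> Y \<Longrightarrow> (\<Sum>x\<in>X. adj y x) = b"
proof -
  assume y: "y \<in> Y"
  have "{x \<in> X. E y x} = {w \<in> V. E y w}" using bipartite parts disjoint y by blast
  then show ?thesis
    using degree_Y[OF y] sum_adj_eq_card[OF finite_X] unfolding Defs.degree_def by simp
qed

lemma edge_count: "card X * m = card Y * b"
proof -
  have "real (card X * m) = (\<Sum>x\<in>X. \<Sum>y\<in>Y. adj x y)" by (simp add: sum_adj_row)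
  also have "\<dots> = (\<Sum>y\<in>Y. \<Sum>x\<in>X. adj y x)" by (subst sum.swap) (simp add: adj_sym)
  also have "\<dots> = real (card Y * b)" by (simp add: sum_adj_col)
  finally show ?thesis by (simp only: of_nat_eq_iff)
qed

text \<open>With \<open>N\<close> the \<open>X \<times> Y\<close> biadjacency matrix, \<open>codegree\<close> is \<open>N N\<^sup>T\<close> and \<open>walks3\<close>
  is \<open>N N\<^sup>T N\<close>. The index conditions in \<open>nbwalks3 x y\<close> and \<open>nbwalks5 x y\<close> make them
  count the non-backtracking walks of length 3 and 5 from \<open>x \<in> X\<close> to \<open>y \<in> Y\<close>.\<close>

definition codegree :: "'a \<Rightarrow> 'a \<Rightarrow> real" where
  "codegree = kmult Y adj adj"

definition walks3 :: "'a \<Rightarrow> 'a \<Rightarrow> real" where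
  "walks3 = kmult X codegree adj"

definition nbwalks3 :: "'a \<Rightarrow> 'a \<Rightarrow> real" where
  "nbwalks3 x y = (\<Sum>y1\<in>Y-{y}. \<Sum>x1\<in>X-{x}. adj x y1 * adj y1 x1 * adj x1 y)"

definition nbwalks5 :: "'a \<Rightarrow> 'a \<Rightarrow> real" where
  "nbwalks5 x y = (\<Sum>y1\<in>Y. \<Sum>x1\<in>X-{x}. \<Sum>y2\<in>Y-{y1,y}. \<Sum>x2\<in>X-{x1}.
      adj x y1 * adj y1 x1 * adj x1 y2 * adj y2 x2 * adj x2 y)"

lemma codegree_sym: "codegree x x' = codegree x' x"
  unfolding codegree_def kmult_def by (simp add: adj_sym mult.commute)

lemma codegree_diag: "x \<in> X \<Longrightarrow> codegree x x = m"
  unfolding codegree_def kmult_def by (simp add: adj_idem sum_adj_row)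

lemma sum_codegree: "x \<in> X \<Longrightarrow> (\<Sum>x'\<in>X. codegree x x') = real m * real b"
  unfolding codegree_def sum_kmult_right
  by (simp add: sum_adj_col sum_adj_row sum_distrib_right[symmetric])

lemma sum_codegree':
  assumes "x' \<in> X"
  shows "(\<Sum>x\<in>X. codegree x x') = real m * real b"
proof -
  have "(\<Sum>x\<in>X. codegree x x') = (\<Sum>x\<in>X. codegree x' x)" by (intro sum.cong refl) (rule codegree_sym)
  then show ?thesis using sum_codegree[OF assms] by simp
qed

lemma sum_kmult_codegree:
  assumes "x \<in> X" and "\<And>x'. x' \<in> X \<Longrightarrow> (\<Sum>y\<in>Y. F x' y) = c"
  shows "(\<Sum>y\<in>Y. kmult X codegree F x y) = real m * real b * c"
  using assms by (simp add: sum_kmult_right sum_codegree sum_distrib_right[symmetric])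

lemma walks3_eq:
  assumes x: "x \<in> X" and y: "y \<in> Y"
  shows "walks3 x y = nbwalks3 x y + (real m + real b - 1) * adj x y"
proof -
  have "walks3 x y = (\<Sum>y1\<in>Y. \<Sum>x'\<in>X. adj x y1 * adj y1 x' * adj x' y)"
    unfolding walks3_def codegree_def kmult_def
    by (subst sum.swap) (simp add: sum_distrib_right)
  also have "\<dots> = (\<Sum>y1\<in>Y. adj x y1 * adj y1 x * adj x y
      + (\<Sum>x'\<in>X-{x}. adj x y1 * adj y1 x' * adj x' y))"
    by (intro sum.cong refl sum.remove[OF finite_X x])
  also have "\<dots> = m * adj x y + (\<Sum>y1\<in>Y. \<Sum>x'\<in>X-{x}. adj x y1 * adj y1 x' * adj x' y)"
    by (simp add: sum.distrib adj_idem sum_distrib_right[symmetric] sum_adj_row x)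
  also have "(\<Sum>y1\<in>Y. \<Sum>x'\<in>X-{x}. adj x y1 * adj y1 x' * adj x' y)
      = (\<Sum>x'\<in>X-{x}. adj x y * adj y x' * adj x' y) + nbwalks3 x y"
    unfolding nbwalks3_def by (rule sum.remove[OF finite_Y y])
  also have "(\<Sum>x'\<in>X-{x}. adj x y * adj y x' * adj x' y) = adj x y * (b - adj y x)"
    using sum_diff1[OF finite_X, of "adj y" x] x sum_adj_col[OF y]
    by (simp add: sum_distrib_left[symmetric] mult.assoc adj_idem)
  also have "adj x y * (b - adj y x) = (real b - 1) * adj x y"
    using adj_cases[of x y] by (auto simp: adj_sym[of y x])
  finally show ?thesis by (simp add: algebra_simps)
qed

lemma adj_idem_left: "c * adj u v * adj v u = c * adj u v"
  by (simp add: mult.assoc adj_idem)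

lemma sum_backtrack_at:
  assumes x: "x \<in> X" and y': "y' \<in> Y"
  shows "(\<Sum>x'\<in>X-{x}. \<Sum>x1\<in>X-{x'}. adj x y' * adj y' x' * adj x' y' * adj y' x1 * adj x1 y)
    = (real b - 2) * (adj x y' * (\<Sum>x1\<in>X. adj y' x1 * adj x1 y)) + adj x y' * adj x y"
proof -
  define U where "U = (\<Sum>x1\<in>X. adj y' x1 * adj x1 y)"
  have "(\<Sum>x'\<in>X-{x}. \<Sum>x1\<in>X-{x'}. adj x y' * adj y' x' * adj x' y' * adj y' x1 * adj x1 y)
      = (\<Sum>x'\<in>X-{x}. adj x y' * (adj y' x' * U - adj y' x' * adj x' y))"
  proof (intro sum.cong refl)
    fix x' assume "x' \<in> X - {x}"
    then have "(\<Sum>x1\<in>X-{x'}. adj y' x1 * adj x1 y) = U - adj y' x' * adj x' y"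
      unfolding U_def by (simp add: sum_diff1[OF finite_X])
    moreover have "(\<Sum>x1\<in>X-{x'}. adj x y' * adj y' x' * adj x' y' * adj y' x1 * adj x1 y)
        = adj x y' * adj y' x' * (\<Sum>x1\<in>X-{x'}. adj y' x1 * adj x1 y)"
      unfolding adj_idem_left by (simp add: sum_distrib_left mult.assoc)
    ultimately show "(\<Sum>x1\<in>X-{x'}. adj x y' * adj y' x' * adj x' y' * adj y' x1 * adj x1 y)
        = adj x y' * (adj y' x' * U - adj y' x' * adj x' y)"
      using adj_cases[of y' x'] by auto
  qed
  also have "\<dots> = adj x y' * ((\<Sum>x'\<in>X-{x}. adj y' x') * U - (\<Sum>x'\<in>X-{x}. adj y' x' * adj x' y))"
    by (simp add: sum_distrib_left sum_distrib_right sum_subtractf algebra_simps)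
  also have "(\<Sum>x'\<in>X-{x}. adj y' x') = real b - adj y' x"
    using sum_diff1[OF finite_X, of "adj y'" x] x sum_adj_col[OF y'] by simp
  also have "(\<Sum>x'\<in>X-{x}. adj y' x' * adj x' y) = U - adj y' x * adj x y"
    using sum_diff1[OF finite_X, of "\<lambda>x'. adj y' x' * adj x' y" x] x unfolding U_def by simp
  also have "adj x y' * ((real b - adj y' x) * U - (U - adj y' x * adj x y))
      = (real b - 2) * (adj x y' * U) + adj x y' * adj x y"
    using adj_cases[of x y'] by (auto simp: adj_sym[of y' x] algebra_simps)
  finally show ?thesis by (simp only: U_def)
qed

lemma nbwalks_backtrack_middle:
  assumes x: "x \<in> X" and y: "y \<in> Y"
  shows "(\<Sum>y'\<in>Y-{y}. \<Sum>x'\<in>X-{x}. \<Sum>x1\<in>X-{x'}.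
      adj x y' * adj y' x' * adj x' y' * adj y' x1 * adj x1 y)
    = (real b - 2) * nbwalks3 x y + (real m - 1) * (real b - 1) * adj x y"
proof -
  define U where "U y' = (\<Sum>x1\<in>X. adj y' x1 * adj x1 y)" for y'
  have inner: "(\<Sum>x'\<in>X-{x}. \<Sum>x1\<in>X-{x'}. adj x y' * adj y' x' * adj x' y' * adj y' x1 * adj x1 y)
      = (real b - 2) * (adj x y' * U y') + adj x y' * adj x y" if "y' \<in> Y" for y'
    unfolding U_def by (rule sum_backtrack_at[OF x that])
  have sum_row: "(\<Sum>y'\<in>Y-{y}. adj x y') = real m - adj x y"
    using sum_diff1[OF finite_Y, of "adj x" y] y sum_adj_row[OF x] by simp
  have "(\<Sum>y'\<in>Y-{y}. adj x y' * U y')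
      = (\<Sum>y'\<in>Y-{y}. adj x y' * adj y' x * adj x y + (\<Sum>x1\<in>X-{x}. adj x y' * adj y' x1 * adj x1 y))"
    unfolding U_def sum_distrib_left mult.assoc by (intro sum.cong refl sum.remove[OF finite_X x])
  also have "\<dots> = (real m - adj x y) * adj x y + nbwalks3 x y"
    unfolding nbwalks3_def by (simp add: sum.distrib adj_idem sum_distrib_right[symmetric] sum_row)
  finally have sum_U: "(\<Sum>y'\<in>Y-{y}. adj x y' * U y') = (real m - 1) * adj x y + nbwalks3 x y"
    using adj_cases[of x y] by auto
  have "(\<Sum>y'\<in>Y-{y}. \<Sum>x'\<in>X-{x}. \<Sum>x1\<in>X-{x'}.
      adj x y' * adj y' x' * adj x' y' * adj y' x1 * adj x1 y)
      = (\<Sum>y'\<in>Y-{y}. (real b - 2) * (adj x y' * U y') + adj x y' * adj x y)"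
    by (intro sum.cong refl) (simp add: inner)
  also have "\<dots> = (real b - 2) * (\<Sum>y'\<in>Y-{y}. adj x y' * U y') + (\<Sum>y'\<in>Y-{y}. adj x y') * adj x y"
    by (simp add: sum.distrib sum_distrib_left sum_distrib_right)
  also have "\<dots> = (real b - 2) * nbwalks3 x y + (real m - 1) * (real b - 1) * adj x y"
    unfolding sum_U sum_row using adj_cases[of x y] by (auto simp: algebra_simps)
  finally show ?thesis .
qed

lemma kmult_codegree_nbwalks3:
  assumes x: "x \<in> X" and y: "y \<in> Y"
  shows "kmult X codegree nbwalks3 x y
    = (real m + real b - 2) * nbwalks3 x y + nbwalks5 x y + (real m - 1) * (real b - 1) * adj x y"
proof -
  define F where "F y' x' y1 x1 = adj x y' * adj y' x' * adj x' y1 * adj y1 x1 * adj x1 y" for y' x' y1 x1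
  have "kmult X codegree nbwalks3 x y = m * nbwalks3 x y + (\<Sum>x'\<in>X-{x}. codegree x x' * nbwalks3 x' y)"
    unfolding kmult_def by (subst sum.remove[OF finite_X x]) (simp add: codegree_diag[OF x])
  also have "(\<Sum>x'\<in>X-{x}. codegree x x' * nbwalks3 x' y)
      = (\<Sum>x'\<in>X-{x}. \<Sum>y'\<in>Y. \<Sum>y1\<in>Y-{y}. \<Sum>x1\<in>X-{x'}. F y' x' y1 x1)"
    unfolding codegree_def kmult_def nbwalks3_def F_def sum_distrib_right
    unfolding sum_distrib_left by (simp add: mult.assoc)
  also have "\<dots> = (\<Sum>y'\<in>Y. \<Sum>x'\<in>X-{x}. \<Sum>y1\<in>Y-{y}. \<Sum>x1\<in>X-{x'}. F y' x' y1 x1)"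
    by (rule sum.swap)
  also have "\<dots> = (\<Sum>y'\<in>Y. (\<Sum>x'\<in>X-{x}. \<Sum>y1\<in>Y-{y',y}. \<Sum>x1\<in>X-{x'}. F y' x' y1 x1)
      + (if y' = y then 0 else \<Sum>x'\<in>X-{x}. \<Sum>x1\<in>X-{x'}. F y' x' y' x1))"
  proof (intro sum.cong refl)
    fix y' assume "y' \<in> Y"
    show "(\<Sum>x'\<in>X-{x}. \<Sum>y1\<in>Y-{y}. \<Sum>x1\<in>X-{x'}. F y' x' y1 x1)
      = (\<Sum>x'\<in>X-{x}. \<Sum>y1\<in>Y-{y',y}. \<Sum>x1\<in>X-{x'}. F y' x' y1 x1)
        + (if y' = y then 0 else \<Sum>x'\<in>X-{x}. \<Sum>x1\<in>X-{x'}. F y' x' y' x1)"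
    proof (cases "y' = y")
      case False
      then show ?thesis by (simp add: sum_remove_if[OF finite_Y \<open>y' \<in> Y\<close>] sum.distrib)
    qed simp
  qed
  also have "\<dots> = nbwalks5 x y + (\<Sum>y'\<in>Y-{y}. \<Sum>x'\<in>X-{x}. \<Sum>x1\<in>X-{x'}. F y' x' y' x1)"
  proof -
    have "(\<Sum>y'\<in>Y. if y' = y then 0 else H y') = (\<Sum>y'\<in>Y-{y}. H y')" for H :: "'a \<Rightarrow> real"
      by (simp add: sum.remove[OF finite_Y y])
    then show ?thesis unfolding nbwalks5_def F_def by (simp add: sum.distrib)
  qed
  also have "(\<Sum>y'\<in>Y-{y}. \<Sum>x'\<in>X-{x}. \<Sum>x1\<in>X-{x'}. F y' x' y' x1)
      = (real b - 2) * nbwalks3 x y + (real m - 1) * (real b - 1) * adj x y"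
    unfolding F_def by (rule nbwalks_backtrack_middle[OF x y])
  finally show ?thesis by (simp add: algebra_simps)
qed

lemma sum_walks3: "x \<in> X \<Longrightarrow> (\<Sum>y\<in>Y. walks3 x y) = real m * real b * real m"
  unfolding walks3_def by (rule sum_kmult_codegree) (simp_all add: sum_adj_row)

lemma sum_nbwalks3:
  assumes x: "x \<in> X"
  shows "(\<Sum>y\<in>Y. nbwalks3 x y) = real m * (real m - 1) * (real b - 1)"
proof -
  have "real m * real b * real m = (\<Sum>y\<in>Y. nbwalks3 x y + (real m + real b - 1) * adj x y)"
    using x by (simp add: sum_walks3[symmetric] walks3_eq)
  also have "\<dots> = (\<Sum>y\<in>Y. nbwalks3 x y) + (real m + real b - 1) * real m"
    using x by (simp add: sum.distrib sum_distrib_left[symmetric] sum_adj_row)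
  finally show ?thesis by (simp add: algebra_simps)
qed

lemma sum_nbwalks5:
  assumes x: "x \<in> X"
  shows "(\<Sum>y\<in>Y. nbwalks5 x y) = real m * ((real m - 1) * (real b - 1))^2"
proof -
  have "real m * real b * (real m * (real m - 1) * (real b - 1))
      = (\<Sum>y\<in>Y. kmult X codegree nbwalks3 x y)"
    using x by (simp add: sum_kmult_codegree sum_nbwalks3)
  also have "\<dots> = (real m + real b - 2) * (\<Sum>y\<in>Y. nbwalks3 x y) + (\<Sum>y\<in>Y. nbwalks5 x y)
      + (real m - 1) * (real b - 1) * (\<Sum>y\<in>Y. adj x y)"
    using x by (simp add: kmult_codegree_nbwalks3 sum.distrib sum_distrib_left)
  finally show ?thesis
    using x by (simp add: sum_nbwalks3 sum_adj_row algebra_simps power2_eq_square)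
qed

lemma adj_prod5: "adj u v * adj v w * adj w z * adj z s * adj s t
    = of_bool (E u v \<and> E v w \<and> E w z \<and> E z s \<and> E s t)"
  unfolding adj_def by (simp add: of_bool_conj mult.assoc)

lemma nbwalks3_eq_card: "nbwalks3 x y
    = card ((Y - {y}) \<times> (X - {x}) \<inter> {(y1, x1). E x y1 \<and> E y1 x1 \<and> E x1 y})"
proof -
  have "nbwalks3 x y = (\<Sum>p\<in>(Y - {y}) \<times> (X - {x}). of_bool (E x (fst p) \<and> E (fst p) (snd p) \<and> E (snd p) y))"
    unfolding nbwalks3_def adj_def sum.cartesian_product split_def by (simp add: of_bool_conj mult.assoc)
  also have "\<dots> = card ((Y - {y}) \<times> (X - {x}) \<inter> {(y1, x1). E x y1 \<and> E y1 x1 \<and> E x1 y})"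
    unfolding split_def using finite_X finite_Y by (intro sum_of_bool_eq) auto
  finally show ?thesis .
qed

lemma nbwalks5_eq_card: "nbwalks5 x y
    = card ((SIGMA y1:Y. SIGMA x1:X-{x}. SIGMA y2:Y-{y1,y}. X-{x1})
        \<inter> {(y1, x1, y2, x2). E x y1 \<and> E y1 x1 \<and> E x1 y2 \<and> E y2 x2 \<and> E x2 y})"
proof -
  have "nbwalks5 x y = (\<Sum>p\<in>(SIGMA y1:Y. SIGMA x1:X-{x}. SIGMA y2:Y-{y1,y}. X-{x1}).
      of_bool (E x (fst p) \<and> E (fst p) (fst (snd p)) \<and> E (fst (snd p)) (fst (snd (snd p)))
        \<and> E (fst (snd (snd p))) (snd (snd (snd p))) \<and> E (snd (snd (snd p))) y))"
    unfolding nbwalks5_def adj_prod5 using finite_X finite_Y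
    by (simp add: sum.Sigma split_def del: sum_of_bool_eq)
  also have "\<dots> = card ((SIGMA y1:Y. SIGMA x1:X-{x}. SIGMA y2:Y-{y1,y}. X-{x1})
        \<inter> {(y1, x1, y2, x2). E x y1 \<and> E y1 x1 \<and> E x1 y2 \<and> E y2 x2 \<and> E x2 y})"
    unfolding split_def using finite_X finite_Y by (intro sum_of_bool_eq) auto
  finally show ?thesis .
qed

lemma card_V_ge_of_row_sums:
  fixes f :: "'a \<Rightarrow> 'a \<Rightarrow> real"
  assumes "X \<noteq> {}" and "0 < m" and "coprime m b"
    and le_1: "\<And>x y. x \<in> X \<Longrightarrow> y \<in> Y \<Longrightarrow> f x y \<le> 1"
    and row: "\<And>x. x \<in> X \<Longrightarrow> (\<Sum>y\<in>Y. f x y) = real (m * K)"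
    and not_tight: "(\<And>x y. x \<in> X \<Longrightarrow> y \<in> Y \<Longrightarrow> f x y = 1) \<Longrightarrow> False"
  shows "(m + b) * (K + 1) \<le> card V"
proof -
  obtain x where "x \<in> X" using \<open>X \<noteq> {}\<close> by auto
  have "real (m * K) \<le> real (card Y)"
    using sum_bounded_above[of Y "f x" 1] le_1 row \<open>x \<in> X\<close> by simp
  then have "m * K \<le> card Y" by (simp only: of_nat_le_iff)
  moreover have "card Y \<noteq> m * K"
  proof
    assume eq: "card Y = m * K"
    have "f x y = 1" if "x \<in> X" "y \<in> Y" for x y
      using sum_eq_card_imp_eq_1[OF finite_Y le_1[OF that(1)]] row[OF that(1)] eq that(2) by simp
    then show False by (rule not_tight)
  qed
  ultimately have "m * K < card Y" by linarith
  have "m dvd card Y * b" unfolding edge_count[symmetric] by simp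
  then obtain k where k: "card Y = m * k"
    using \<open>coprime m b\<close> by (auto simp: coprime_dvd_mult_left_iff elim: dvdE)
  then have "card X = b * k" using edge_count \<open>0 < m\<close> by (simp add: ac_simps)
  have "K + 1 \<le> k" using \<open>m * K < card Y\<close> k by simp
  then have "(m + b) * (K + 1) \<le> (m + b) * k" by (rule mult_le_mono2)
  also have "\<dots> = card V" using card_V k \<open>card X = b * k\<close> by (simp add: algebra_simps)
  finally show ?thesis .
qed

lemma walks3_of_unique_walks_upto3:
  assumes unique: "\<And>x y. x \<in> X \<Longrightarrow> y \<in> Y \<Longrightarrow> adj x y + nbwalks3 x y = 1" and "x \<in> X" "y \<in> Y"
  shows "walks3 x y = (real m + real b - 2) * adj x y + 1"
  using walks3_eq[OF assms(2,3)] unique[OF assms(2,3)] by (simp add: algebra_simps)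

lemma kmult_codegree_codegree: "kmult X codegree codegree = kmult Y walks3 adj"
  unfolding walks3_def by (simp add: codegree_def kmult_assoc)

lemma codegree_square_of_unique_walks_upto3:
  assumes unique: "\<And>x y. x \<in> X \<Longrightarrow> y \<in> Y \<Longrightarrow> adj x y + nbwalks3 x y = 1"
    and "x \<in> X" "x' \<in> X"
  shows "kmult X codegree codegree x x' = (real m + real b - 2) * codegree x x' + m"
proof -
  define c where "c = real m + real b - 2"
  have "kmult X codegree codegree x x' = kmult Y (\<lambda>x y. c * adj x y + 1) adj x x'"
    unfolding kmult_codegree_codegree c_def using walks3_of_unique_walks_upto3[OF unique \<open>x \<in> X\<close>]
    by (intro kmult_cong) auto
  also have "\<dots> = c * codegree x x' + (\<Sum>y\<in>Y. adj y x')"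
    unfolding codegree_def kmult_affine_left by simp
  finally show ?thesis using sum_adj_row' \<open>x' \<in> X\<close> by (simp add: c_def)
qed

lemma kmult_codegree_walks3_of_unique_walks_upto5:
  assumes unique: "\<And>x y. x \<in> X \<Longrightarrow> y \<in> Y \<Longrightarrow> adj x y + nbwalks3 x y + nbwalks5 x y = 1"
    and x: "x \<in> X" and y: "y \<in> Y"
  shows "kmult X codegree walks3 x y = 2 * (real m + real b - 2) * walks3 x y
    - ((real m - 1)^2 + (real m - 1) * (real b - 1) + (real b - 1)^2) * adj x y + 1"
proof -
  define c where "c = real m + real b - 1"
  have nb5: "nbwalks5 x y = 1 - adj x y - nbwalks3 x y" using unique[OF x y] by simp
  have "kmult X codegree walks3 x y = kmult X codegree (\<lambda>x' y. nbwalks3 x' y + c * adj x' y) x y"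
    unfolding c_def using walks3_eq y by (intro kmult_cong) auto
  also have "\<dots> = kmult X codegree nbwalks3 x y + c * walks3 x y"
    unfolding walks3_def kmult_def by (simp add: algebra_simps sum.distrib sum_distrib_left)
  also have "\<dots> = 2 * (real m + real b - 2) * walks3 x y
    - ((real m - 1)^2 + (real m - 1) * (real b - 1) + (real b - 1)^2) * adj x y + 1"
    unfolding kmult_codegree_nbwalks3[OF x y] walks3_eq[OF x y] c_def nb5
    by (simp add: algebra_simps power2_eq_square)
  finally show ?thesis .
qed

lemma codegree_cube_of_unique_walks_upto5:
  assumes unique: "\<And>x y. x \<in> X \<Longrightarrow> y \<in> Y \<Longrightarrow> adj x y + nbwalks3 x y + nbwalks5 x y = 1"
    and x: "x \<in> X" and x': "x' \<in> X"
  shows "kmult X codegree (kmult X codegree codegree) x x'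
    = 2 * (real m + real b - 2) * kmult X codegree codegree x x'
      - ((real m - 1)^2 + (real m - 1) * (real b - 1) + (real b - 1)^2) * codegree x x' + m"
proof -
  define s where "s = 2 * (real m + real b - 2)"
  define p where "p = (real m - 1)^2 + (real m - 1) * (real b - 1) + (real b - 1)^2"
  have "kmult X codegree (kmult X codegree codegree) x x' = kmult Y (kmult X codegree walks3) adj x x'"
    unfolding kmult_codegree_codegree by (simp add: kmult_assoc)
  also have "\<dots> = kmult Y (\<lambda>x y. s * walks3 x y - p * adj x y + 1) adj x x'"
    unfolding s_def p_def using kmult_codegree_walks3_of_unique_walks_upto5[OF unique x] by (intro kmult_cong) auto
  also have "\<dots> = s * kmult Y walks3 adj x x' - p * codegree x x' + (\<Sum>y\<in>Y. adj y x')"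
    unfolding codegree_def kmult_affine2_left by simp
  finally show ?thesis
    using sum_adj_row'[OF x'] by (simp add: s_def p_def kmult_codegree_codegree)
qed

lemma card_X_of_unique_walks:
  fixes f :: "'a \<Rightarrow> 'a \<Rightarrow> real"
  assumes "x \<in> X" and "0 < m" and "\<And>y. y \<in> Y \<Longrightarrow> f x y = 1"
    and "(\<Sum>y\<in>Y. f x y) = real m * K"
  shows "real (card X) = real b * K"
proof -
  have "real (card Y) = real m * K" using assms(3,4) by simp
  moreover have "real (card X) * real m = real (card Y) * real b"
    using edge_count by (simp only: of_nat_mult[symmetric])
  ultimately have "real (card X) * real m = real b * K * real m" by (simp add: ac_simps)
  then show ?thesis using \<open>0 < m\<close> by simp
qed

lemma codegree_square_diag_of_unique_walks_upto5:
  assumes unique: "\<And>x y. x \<in> X \<Longrightarrow> y \<in> Y \<Longrightarrow> adj x y + nbwalks3 x y + nbwalks5 x y = 1"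
    and x: "x \<in> X"
  shows "kmult X codegree codegree x x = (real m + real b - 1) * real m"
proof -
  have "walks3 x y * adj y x = (real m + real b - 1) * adj x y" if y: "y \<in> Y" for y
  proof -
    have "nbwalks3 x y * adj x y = 0"
      using unique[OF x y] adj_cases[of x y] nbwalks3_eq_card[of x y] nbwalks5_eq_card[of x y] by auto
    moreover have "walks3 x y * adj y x
        = nbwalks3 x y * adj x y + (real m + real b - 1) * (adj x y * adj x y)"
      unfolding walks3_eq[OF x y] adj_sym[of y x] by (simp add: algebra_simps)
    ultimately show ?thesis using adj_cases[of x y] by auto
  qed
  then have "kmult X codegree codegree x x = (\<Sum>y\<in>Y. (real m + real b - 1) * adj x y)"
    unfolding kmult_codegree_codegree kmult_def by (intro sum.cong) auto
  then show ?thesis using sum_adj_row[OF x] by (simp add: sum_distrib_left[symmetric])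
qed

lemma dvd_of_unique_walks_upto3:
  assumes "X \<noteq> {}" and "2 \<le> m" and "1 \<le> b"
    and unique: "\<And>x y. x \<in> X \<Longrightarrow> y \<in> Y \<Longrightarrow> adj x y + nbwalks3 x y = 1"
  shows "(int m + int b - 2) dvd int m * int b * (int m - 1) * (int b - 1)"
proof -
  define n where "n = real (card X)"
  define \<kappa> where "\<kappa> = real m * real b"
  define K where "K = 1 + (real m - 1) * (real b - 1)"
  obtain x where x: "x \<in> X" using \<open>X \<noteq> {}\<close> by auto
  have n: "n = real b * K" unfolding n_def
    by (rule card_X_of_unique_walks[where f = "\<lambda>x y. adj x y + nbwalks3 x y", OF x _ unique[OF x]])
      (use x \<open>2 \<le> m\<close> in \<open>simp_all add: sum.distrib sum_adj_row sum_nbwalks3 K_def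
        distrib_left mult.assoc\<close>)
  have "n \<noteq> 0" using x finite_X by (auto simp: n_def)
  have "(\<Sum>x\<in>X. codegree x x - \<kappa> / n) / (real m + real b - 2) \<in> \<nat>"
    unfolding n_def
  proof (rule trace_div_Nats_of_regular_square_eq[where P = codegree and \<mu> = "real m"])
    show "real (card X) * real m = \<kappa>^2 - (real m + real b - 2) * \<kappa>"
      unfolding n[unfolded n_def] \<kappa>_def K_def by (simp add: algebra_simps power2_eq_square)
  qed (use \<open>2 \<le> m\<close> \<open>1 \<le> b\<close> in \<open>simp_all add: finite_X \<kappa>_def sum_codegree sum_codegree'
      codegree_square_of_unique_walks_upto3[OF unique]\<close>)
  moreover have "(\<Sum>x\<in>X. codegree x x - \<kappa> / n) = n * (real m - \<kappa> / n)"
    by (simp add: codegree_diag n_def)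
  moreover have "n * (real m - \<kappa> / n) = n * real m - \<kappa>"
    using \<open>n \<noteq> 0\<close> by (simp add: field_simps)
  moreover have "\<dots> = real m * real b * (real m - 1) * (real b - 1)"
    unfolding n \<kappa>_def K_def by (simp add: algebra_simps)
  ultimately have "real m * real b * (real m - 1) * (real b - 1) / (real m + real b - 2) \<in> \<nat>"
    by simp
  then show ?thesis using \<open>2 \<le> m\<close> \<open>1 \<le> b\<close> by (intro int_dvd_of_div_Nats) simp_all
qed

lemma dvd_of_unique_walks_upto5:
  assumes "X \<noteq> {}" and "2 \<le> m" and "1 \<le> b"
    and unique: "\<And>x y. x \<in> X \<Longrightarrow> y \<in> Y \<Longrightarrow> adj x y + nbwalks3 x y + nbwalks5 x y = 1"
  shows "((int m - 1)^2 + (int m - 1) * (int b - 1) + (int b - 1)^2) dvd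
    int m * int b * ((int m - 1) * (int b - 1)) * ((int m + int b - 3) * (1 + (int m - 1) * (int b - 1)) + 1)"
proof -
  define n where "n = real (card X)"
  define \<kappa> where "\<kappa> = real m * real b"
  define r where "r = (real m - 1) * (real b - 1)"
  define s where "s = 2 * (real m + real b - 2)"
  define p where "p = (real m - 1)^2 + (real m - 1) * (real b - 1) + (real b - 1)^2"
  obtain x where x: "x \<in> X" using \<open>X \<noteq> {}\<close> by auto
  have n: "n = real b * (1 + r + r^2)" unfolding n_def
    by (rule card_X_of_unique_walks[where f = "\<lambda>x y. adj x y + nbwalks3 x y + nbwalks5 x y",
          OF x _ unique[OF x]])
      (use x \<open>2 \<le> m\<close> in \<open>simp_all add: sum.distrib sum_adj_row sum_nbwalks3 sum_nbwalks5 r_def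
        distrib_left mult.assoc\<close>)
  have "n \<noteq> 0" using x finite_X by (auto simp: n_def)
  have "0 < (real m - 1)^2" and "0 \<le> (real m - 1) * (real b - 1)"
    using \<open>2 \<le> m\<close> \<open>1 \<le> b\<close> by auto
  then have "p \<noteq> 0" unfolding p_def by (smt (verit) zero_le_power2)
  have "(\<Sum>x\<in>X. s * (codegree x x - \<kappa> / n) - (kmult X codegree codegree x x - \<kappa>^2 / n)) / p \<in> \<nat>"
    unfolding n_def
  proof (rule trace_div_Nats_of_regular_cube_eq[where P = codegree and \<mu> = "real m"])
    show "real (card X) * real m = \<kappa>^3 - s * \<kappa>^2 + p * \<kappa>"
      unfolding n[unfolded n_def] \<kappa>_def s_def p_def r_def
      by (simp add: algebra_simps power2_eq_square power3_eq_cube)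
  qed (use \<open>p \<noteq> 0\<close> in \<open>simp_all add: finite_X \<kappa>_def sum_codegree sum_codegree' s_def p_def
      codegree_cube_of_unique_walks_upto5[OF unique]\<close>)
  moreover have "(\<Sum>x\<in>X. s * (codegree x x - \<kappa> / n) - (kmult X codegree codegree x x - \<kappa>^2 / n))
      = n * (s * (real m - \<kappa> / n) - ((real m + real b - 1) * real m - \<kappa>^2 / n))"
    by (simp add: codegree_diag codegree_square_diag_of_unique_walks_upto5[OF unique] n_def)
  moreover have "n * (s * (real m - \<kappa> / n) - ((real m + real b - 1) * real m - \<kappa>^2 / n))
      = s * (n * real m - \<kappa>) - (n * (real m + real b - 1) * real m - \<kappa>^2)"
    using \<open>n \<noteq> 0\<close> by (simp add: field_simps)
  moreover have "\<dots> = real m * real b * r * ((real m + real b - 3) * (1 + r) + 1)"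
    unfolding n \<kappa>_def s_def r_def by (simp add: algebra_simps power2_eq_square)
  ultimately have "real m * real b * r * ((real m + real b - 3) * (1 + r) + 1) / p \<in> \<nat>"
    by simp
  then show ?thesis using \<open>p \<noteq> 0\<close> by (intro int_dvd_of_div_Nats) (simp_all add: p_def r_def)
qed

end

section \<open>Bipartite biregular graphs without short cycles\<close>

locale bipartite_biregular_large_girth = bipartite_biregular +
  fixes L :: nat
  assumes no_short_cycle: "\<And>k. 3 \<le> k \<Longrightarrow> k \<le> L \<Longrightarrow> \<not> has_cycle_of_length V E k"
begin

lemmas nb_walks_unique = non_backtracking_walks_unique[OF simple no_short_cycle]

lemma nbwalks3_le_1:
  assumes "6 \<le> L"
  shows "nbwalks3 x y \<le> 1"
proof -
  let ?W = "(Y - {y}) \<times> (X - {x}) \<inter> {(y1, x1). E x y1 \<and> E y1 x1 \<and> E x1 y}"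
  have unique: "p = q" if "p \<in> ?W" "q \<in> ?W" for p q
  proof -
    obtain y1 x1 y1' x1' where pq: "p = (y1, x1)" "q = (y1', x1')" by fastforce
    have "3 = (3::nat) \<and> (\<forall>i\<le>3. [x, y1, x1, y] ! i = [x, y1', x1', y] ! i)"
      using that \<open>6 \<le> L\<close> unfolding pq
      by (intro nb_walks_unique[where w = "nth [x, y1, x1, y]" and w' = "nth [x, y1', x1', y]"])
        (auto simp: walk_list_simps)
    from this[THEN conjunct2, rule_format, of 1] this[THEN conjunct2, rule_format, of 2]
    show ?thesis unfolding pq by (simp add: numeral_2_eq_2)
  qed
  have "finite ?W" using finite_X finite_Y by auto
  then have "card ?W \<le> Suc 0" using unique by (subst card_le_Suc0_iff_eq) blast+
  then show ?thesis unfolding nbwalks3_eq_card by simp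
qed

lemma nbwalks5_le_1:
  assumes "10 \<le> L"
  shows "nbwalks5 x y \<le> 1"
proof -
  let ?W = "(SIGMA y1:Y. SIGMA x1:X-{x}. SIGMA y2:Y-{y1,y}. X-{x1})
    \<inter> {(y1, x1, y2, x2). E x y1 \<and> E y1 x1 \<and> E x1 y2 \<and> E y2 x2 \<and> E x2 y}"
  have unique: "p = q" if "p \<in> ?W" "q \<in> ?W" for p q
  proof -
    obtain y1 x1 y2 x2 where p: "p = (y1, x1, y2, x2)" by (cases p rule: prod_cases4) blast
    obtain y1' x1' y2' x2' where q: "q = (y1', x1', y2', x2')" by (cases q rule: prod_cases4) blast
    have "5 = (5::nat) \<and> (\<forall>i\<le>5. [x, y1, x1, y2, x2, y] ! i = [x, y1', x1', y2', x2', y] ! i)"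
      using that \<open>10 \<le> L\<close> unfolding p q
      by (intro nb_walks_unique[where w = "nth [x, y1, x1, y2, x2, y]"
            and w' = "nth [x, y1', x1', y2', x2', y]"]) (auto simp: walk_list_simps)
    from this[THEN conjunct2, rule_format, of 1] this[THEN conjunct2, rule_format, of 2]
      this[THEN conjunct2, rule_format, of 3] this[THEN conjunct2, rule_format, of 4]
    show ?thesis unfolding p q by (simp add: eval_nat_numeral)
  qed
  have "finite ?W" using finite_X finite_Y by auto
  then have "card ?W \<le> Suc 0" using unique by (subst card_le_Suc0_iff_eq) blast+
  then show ?thesis unfolding nbwalks5_eq_card by simp
qed

lemma nbwalks3_eq_0_if_adj:
  assumes "4 \<le> L" and "E x y"
  shows "nbwalks3 x y = 0"
proof -
  have "(Y - {y}) \<times> (X - {x}) \<inter> {(y1, x1). E x y1 \<and> E y1 x1 \<and> E x1 y} = {}"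
  proof (intro equals0I)
    fix p assume "p \<in> (Y - {y}) \<times> (X - {x}) \<inter> {(y1, x1). E x y1 \<and> E y1 x1 \<and> E x1 y}"
    then obtain y1 x1 where "y1 \<in> Y - {y}" "x1 \<in> X - {x}" "E x y1" "E y1 x1" "E x1 y" by auto
    then have "1 = (3::nat) \<and> (\<forall>i\<le>1. [x, y] ! i = [x, y1, x1, y] ! i)"
      using assms
      by (intro nb_walks_unique[where w = "nth [x, y]" and w' = "nth [x, y1, x1, y]"])
        (auto simp: walk_list_simps)
    then show False by simp
  qed
  then show ?thesis unfolding nbwalks3_eq_card by simp
qed

lemma nbwalks5_eq_0_if_shorter:
  assumes "q < 5" and "q + 5 \<le> L"
    and "is_walk E w q" and "non_backtracking w q" and "w 0 = x" and "w q = y"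
  shows "nbwalks5 x y = 0"
proof -
  have "(SIGMA y1:Y. SIGMA x1:X-{x}. SIGMA y2:Y-{y1,y}. X-{x1})
    \<inter> {(y1, x1, y2, x2). E x y1 \<and> E y1 x1 \<and> E x1 y2 \<and> E y2 x2 \<and> E x2 y} = {}"
  proof (intro equals0I)
    fix p assume p: "p \<in> (SIGMA y1:Y. SIGMA x1:X-{x}. SIGMA y2:Y-{y1,y}. X-{x1})
      \<inter> {(y1, x1, y2, x2). E x y1 \<and> E y1 x1 \<and> E x1 y2 \<and> E y2 x2 \<and> E x2 y}"
    obtain y1 x1 y2 x2 where "p = (y1, x1, y2, x2)" by (cases p rule: prod_cases4) blast
    then have "q = 5 \<and> (\<forall>i\<le>q. w i = [x, y1, x1, y2, x2, y] ! i)"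
      using assms p
      by (intro nb_walks_unique[where w' = "nth [x, y1, x1, y2, x2, y]"]) (auto simp: walk_list_simps)
    then show False using \<open>q < 5\<close> by simp
  qed
  then show ?thesis unfolding nbwalks5_eq_card by simp
qed

lemma adj_nbwalks3_le_1:
  assumes "6 \<le> L"
  shows "adj x y + nbwalks3 x y \<le> 1"
  using assms nbwalks3_le_1 nbwalks3_eq_0_if_adj by (cases "E x y") (auto simp: adj_def)

lemma adj_nbwalks3_nbwalks5_le_1:
  assumes "10 \<le> L"
  shows "adj x y + nbwalks3 x y + nbwalks5 x y \<le> 1"
proof (cases "E x y")
  case True
  then have "nbwalks5 x y = 0"
    using assms by (intro nbwalks5_eq_0_if_shorter[where w = "nth [x, y]" and q = 1])
      (auto simp: walk_list_simps)
  then show ?thesis using True assms nbwalks3_eq_0_if_adj by (simp add: adj_def)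
next
  case False
  show ?thesis
  proof (cases "nbwalks3 x y = 0")
    case True
    then show ?thesis using False assms nbwalks5_le_1 by (simp add: adj_def)
  next
    case nonzero: False
    then obtain y1 x1 where "y1 \<in> Y - {y}" "x1 \<in> X - {x}" "E x y1" "E y1 x1" "E x1 y"
      unfolding nbwalks3_eq_card by (auto simp: card_eq_0_iff)
    then have "nbwalks5 x y = 0"
      using assms by (intro nbwalks5_eq_0_if_shorter[where w = "nth [x, y1, x1, y]" and q = 3])
        (auto simp: walk_list_simps)
    then show ?thesis using False assms nbwalks3_le_1 by (simp add: adj_def)
  qed
qed

lemma card_V_ge_girth8:
  assumes "6 \<le> L" and "X \<noteq> {}" and "2 \<le> m" and "1 \<le> b" and "coprime m b"
    and not_dvd: "\<not> (int m + int b - 2) dvd int m * int b * (int m - 1) * (int b - 1)"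
  shows "(m + b) * (2 + (m - 1) * (b - 1)) \<le> card V"
proof -
  have "(m + b) * (1 + (m - 1) * (b - 1) + 1) \<le> card V"
  proof (rule card_V_ge_of_row_sums[where f = "\<lambda>x y. adj x y + nbwalks3 x y"])
    show "(\<Sum>y\<in>Y. adj x y + nbwalks3 x y) = real (m * (1 + (m - 1) * (b - 1)))" if "x \<in> X" for x
      using that \<open>2 \<le> m\<close> \<open>1 \<le> b\<close>
      by (simp add: sum.distrib sum_adj_row sum_nbwalks3 of_nat_diff distrib_left mult.assoc)
    show False if "\<And>x y. x \<in> X \<Longrightarrow> y \<in> Y \<Longrightarrow> adj x y + nbwalks3 x y = 1"
      using dvd_of_unique_walks_upto3[OF \<open>X \<noteq> {}\<close> \<open>2 \<le> m\<close> \<open>1 \<le> b\<close> that] not_dvd by blast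
  qed (use assms adj_nbwalks3_le_1 in auto)
  then show ?thesis by simp
qed

lemma card_V_ge_girth12:
  assumes "10 \<le> L" and "X \<noteq> {}" and "2 \<le> m" and "1 \<le> b" and "coprime m b"
    and not_dvd: "\<not> ((int m - 1)^2 + (int m - 1) * (int b - 1) + (int b - 1)^2) dvd
      int m * int b * ((int m - 1) * (int b - 1)) * ((int m + int b - 3) * (1 + (int m - 1) * (int b - 1)) + 1)"
  shows "(m + b) * (2 + (m - 1) * (b - 1) + ((m - 1) * (b - 1))^2) \<le> card V"
proof -
  have "(m + b) * (1 + (m - 1) * (b - 1) + ((m - 1) * (b - 1))^2 + 1) \<le> card V"
  proof (rule card_V_ge_of_row_sums[where f = "\<lambda>x y. adj x y + nbwalks3 x y + nbwalks5 x y"])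
    show "(\<Sum>y\<in>Y. adj x y + nbwalks3 x y + nbwalks5 x y)
        = real (m * (1 + (m - 1) * (b - 1) + ((m - 1) * (b - 1))^2))" if "x \<in> X" for x
      using that \<open>2 \<le> m\<close> \<open>1 \<le> b\<close>
      by (simp add: sum.distrib sum_adj_row sum_nbwalks3 sum_nbwalks5 of_nat_diff distrib_left mult.assoc)
    show False if "\<And>x y. x \<in> X \<Longrightarrow> y \<in> Y \<Longrightarrow> adj x y + nbwalks3 x y + nbwalks5 x y = 1"
      using dvd_of_unique_walks_upto5[OF \<open>X \<noteq> {}\<close> \<open>2 \<le> m\<close> \<open>1 \<le> b\<close> that] not_dvd by blast
  qed (use assms adj_nbwalks3_nbwalks5_le_1 in auto)
  then show ?thesis by simp
qed

end

lemma bip_biregular_imp_large_girth: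
  assumes "bip_biregular V E m b g"
  obtains X Y where "bipartite_biregular_large_girth V E X Y m b (g - 1)" and "X \<noteq> {}"
proof -
  from assms obtain X Y where simple: "simple_graph V E" and "X \<union> Y = V" "X \<inter> Y = {}"
    and bip: "\<forall>u v. E u v \<longrightarrow> (u \<in> X \<and> v \<in> Y) \<or> (u \<in> Y \<and> v \<in> X)"
    and "\<forall>x\<in>X. Defs.degree V E x = m" "\<forall>y\<in>Y. Defs.degree V E y = b"
    and "\<exists>k. has_cycle_of_length V E k" and "girth V E = g"
    unfolding bip_biregular_def by blast
  have "\<not> has_cycle_of_length V E k" if "3 \<le> k" "k \<le> g - 1" for k
  proof
    assume "has_cycle_of_length V E k"
    then have "girth V E \<le> k" unfolding girth_def by (rule Least_le)
    then show False using \<open>girth V E = g\<close> that by simp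
  qed
  then have "bipartite_biregular_large_girth V E X Y m b (g - 1)"
    by unfold_locales (use simple \<open>X \<union> Y = V\<close> \<open>X \<inter> Y = {}\<close> bip
        \<open>\<forall>x\<in>X. Defs.degree V E x = m\<close> \<open>\<forall>y\<in>Y. Defs.degree V E y = b\<close> in auto)
  moreover obtain cs where cs: "is_cycle V E cs"
    using \<open>\<exists>k. has_cycle_of_length V E k\<close> unfolding has_cycle_of_length_def by blast
  then have "3 \<le> length cs" and "\<forall>i<length cs. E (cs ! i) (cs ! ((i + 1) mod length cs))"
    unfolding is_cycle_def by auto
  then have "E (cs ! 0) (cs ! 1)" by (auto dest: spec[of _ 0])
  then have "X \<noteq> {}" using bip by blast
  ultimately show ?thesis using that by blast
qed

lemma bip_biregular_girth8_card_ge: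
  assumes "bip_biregular V E m b g" and "8 \<le> g" and "2 \<le> m" and "1 \<le> b" and "coprime m b"
    and "\<not> (int m + int b - 2) dvd int m * int b * (int m - 1) * (int b - 1)"
  shows "(m + b) * (2 + (m - 1) * (b - 1)) \<le> card V"
proof -
  obtain X Y where "bipartite_biregular_large_girth V E X Y m b (g - 1)" and "X \<noteq> {}"
    using bip_biregular_imp_large_girth[OF assms(1)] .
  then interpret bipartite_biregular_large_girth V E X Y m b "g - 1" by simp
  show ?thesis using card_V_ge_girth8 assms \<open>X \<noteq> {}\<close> by simp
qed

lemma bip_biregular_girth12_card_ge:
  assumes "bip_biregular V E m b g" and "12 \<le> g" and "2 \<le> m" and "1 \<le> b" and "coprime m b"
    and "\<not> ((int m - 1)^2 + (int m - 1) * (int b - 1) + (int b - 1)^2) dvd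
      int m * int b * ((int m - 1) * (int b - 1)) * ((int m + int b - 3) * (1 + (int m - 1) * (int b - 1)) + 1)"
  shows "(m + b) * (2 + (m - 1) * (b - 1) + ((m - 1) * (b - 1))^2) \<le> card V"
proof -
  obtain X Y where "bipartite_biregular_large_girth V E X Y m b (g - 1)" and "X \<noteq> {}"
    using bip_biregular_imp_large_girth[OF assms(1)] .
  then interpret bipartite_biregular_large_girth V E X Y m b "g - 1" by simp
  show ?thesis using card_V_ge_girth12 assms \<open>X \<noteq> {}\<close> by simp
qed

text \<open>In each of the following lemmas an integer combination of divisor and dividend is a small
  constant (the cofactors come from the extended Euclidean algorithm over \<open>\<rat>\<close>), which the
  divisor exceeds.\<close>

lemma not_dvd_girth8_Suc:
  fixes x :: int
  assumes "3 \<le> x"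
  shows "\<not> (2 * x - 1) dvd x^2 * (x^2 - 1)"
proof
  assume "(2 * x - 1) dvd x^2 * (x^2 - 1)"
  then have "(2 * x - 1) dvd (2 * x - 1) * (8 * x^3 + 4 * x^2 - 6 * x - 3) - 16 * (x^2 * (x^2 - 1))"
    by (intro dvd_diff) auto
  also have "\<dots> = 3" by (simp add: algebra_simps eval_nat_numeral)
  finally have "2 * x - 1 \<le> 3" by (rule zdvd_imp_le) simp
  then show False using assms by simp
qed

lemma not_dvd_girth8_square_Suc:
  fixes x :: int
  assumes "3 \<le> x"
  shows "\<not> (x^2 + x - 1) dvd x^3 * (x - 1) * (x^2 + 1)"
proof
  assume "(x^2 + x - 1) dvd x^3 * (x - 1) * (x^2 + 1)"
  then have "(x^2 + x - 1) dvd (x^2 + x - 1) * (18 * x^5 - 7 * x^4 + 14 * x^3 - 10 * x^2 - 5 * x - 5)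
      - (29 + 18 * x) * (x^3 * (x - 1) * (x^2 + 1))"
    by (intro dvd_diff) auto
  also have "\<dots> = 5" by (simp add: algebra_simps eval_nat_numeral)
  finally have "x^2 + x - 1 \<le> 5" by (rule zdvd_imp_le) simp
  moreover have "3 * 3 \<le> x * x" using assms by (intro mult_mono) auto
  ultimately show False using assms by (simp add: power2_eq_square)
qed

lemma not_dvd_girth12_Suc:
  fixes x :: int
  assumes "3 \<le> x"
  shows "\<not> (3 * x^2 - 3 * x + 1) dvd x^2 * (x^2 - 1) * (2 * (x - 1) * (x^2 - x + 1) + 1)"
proof
  let ?N = "x^2 * (x^2 - 1) * (2 * (x - 1) * (x^2 - x + 1) + 1)"
  assume "(3 * x^2 - 3 * x + 1) dvd ?N"
  then have "(3 * x^2 - 3 * x + 1) dvd (3 * x^2 - 3 * x + 1)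
      * (7 + 21 * x + 123 * x^2 - 180 * x^3 - 18 * x^4 + 162 * x^5 - 108 * x^6) + 81 * (2 * x - 1) * ?N"
    by (intro dvd_add) auto
  also have "\<dots> = 7" by (simp add: algebra_simps eval_nat_numeral)
  finally have "3 * x^2 - 3 * x + 1 \<le> 7" by (rule zdvd_imp_le) simp
  moreover have "3 * x \<le> x^2" using assms by (simp add: power2_eq_square mult_right_mono)
  ultimately show False using assms by simp
qed

lemma coprime_square_Suc: "coprime (m::nat) (m^2 + 1)"
proof (rule coprimeI)
  fix c assume "c dvd m" and "c dvd m^2 + 1"
  then have "c dvd m^2 + 1 - m^2" by (intro dvd_diff_nat) (auto simp: power2_eq_square)
  then show "is_unit c" by simp
qed

lemma card_ge_girth8_Suc:
  assumes "3 \<le> m" and "bip_biregular V E m (m + 1) 8"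
  shows "(2 * m + 1) * (m^2 - m + 2) \<le> card V"
proof -
  have "\<not> (int m + int (m + 1) - 2) dvd int m * int (m + 1) * (int m - 1) * (int (m + 1) - 1)"
    using not_dvd_girth8_Suc[of "int m"] assms(1) by (simp add: algebra_simps power2_eq_square)
  then have "(m + (m + 1)) * (2 + (m - 1) * (m + 1 - 1)) \<le> card V"
    using assms by (intro bip_biregular_girth8_card_ge) auto
  moreover obtain k where "m = k + 3" using assms(1) by (metis add.commute le_iff_add)
  ultimately show ?thesis by (simp add: algebra_simps power2_eq_square)
qed

lemma card_ge_girth8_square_Suc:
  assumes "3 \<le> m" and "bip_biregular V E m (m^2 + 1) 8"
  shows "(m^2 + m + 1) * (m^3 - m^2 + 2) \<le> card V"
proof -
  have "\<not> (int m + int (m^2 + 1) - 2) dvd int m * int (m^2 + 1) * (int m - 1) * (int (m^2 + 1) - 1)"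
    using not_dvd_girth8_square_Suc[of "int m"] assms(1)
    by (simp add: algebra_simps power2_eq_square power3_eq_cube)
  then have "(m + (m^2 + 1)) * (2 + (m - 1) * (m^2 + 1 - 1)) \<le> card V"
    using assms coprime_square_Suc[of m] by (intro bip_biregular_girth8_card_ge) auto
  moreover obtain k where "m = k + 3" using assms(1) by (metis add.commute le_iff_add)
  ultimately show ?thesis by (simp add: algebra_simps power2_eq_square power3_eq_cube)
qed

lemma card_ge_girth12_Suc:
  assumes "3 \<le> m" and "bip_biregular V E m (m + 1) 12"
  shows "(2 * m + 1) * (m^4 - 2 * m^3 + 2 * m^2 - m + 2) \<le> card V"
proof -
  have "\<not> ((int m - 1)^2 + (int m - 1) * (int (m + 1) - 1) + (int (m + 1) - 1)^2) dvd
      int m * int (m + 1) * ((int m - 1) * (int (m + 1) - 1))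
        * ((int m + int (m + 1) - 3) * (1 + (int m - 1) * (int (m + 1) - 1)) + 1)"
    using not_dvd_girth12_Suc[of "int m"] assms(1)
    by (simp add: algebra_simps power2_eq_square)
  then have "(m + (m + 1)) * (2 + (m - 1) * (m + 1 - 1) + ((m - 1) * (m + 1 - 1))^2) \<le> card V"
    using assms by (intro bip_biregular_girth12_card_ge) auto
  moreover obtain k where "m = k + 3" using assms(1) by (metis add.commute le_iff_add)
  ultimately show ?thesis
    by (simp add: algebra_simps power2_eq_square power3_eq_cube power4_eq_xxxx)
qed

theorem mainTheorem8:
  fixes m :: nat
  assumes "m \<ge> 3"
  shows "(\<forall>(V :: 'a set) E. bip_biregular V E m (m + 1) 8 \<longrightarrow>
            card V \<ge> (2*m + 1) * (m^2 - m + 2))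
       \<and> (\<forall>(V :: 'a set) E. bip_biregular V E m (m^2 + 1) 8 \<longrightarrow>
            card V \<ge> (m^2 + m + 1) * (m^3 - m^2 + 2))
       \<and> (\<forall>(V :: 'a set) E. bip_biregular V E m (m + 1) 12 \<longrightarrow>
            card V \<ge> (2*m + 1) * (m^4 - 2*m^3 + 2*m^2 - m + 2))"
  using card_ge_girth8_Suc card_ge_girth8_square_Suc card_ge_girth12_Suc assms
  by auto

end
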